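(* Let $K$ be an algebraically closed field of characteristic zero, $\mathcal{K}=K(t)$, $\phi_2(z) := \frac{(t+1)(z-1)}{z+t}$, and let $\alpha \in \mathcal{K}$ satisfy condition $( * )$. Then (A) $\phi_2(\alpha)$ also satisfies $( * )$, and (B) $h(\phi_2(\alpha)) = h(\alpha)+1$.
   Context: Condition $( * )$ on $\beta\in\mathcal{K}$: (i) $\beta$ vanishes at $\mathfrak{p}_{-1}$; (ii) $\beta^2-\beta+t+1$ vanishes at $\mathfrak{p}_{-1}$, and possibly at $\mathfrak{p}_{-3/4}$, but at no other place of $\mathcal{K}$; (iii) if $\beta^2-\beta+t+1$ vanishes at $\mathfrak{p}_{-3/4}$, then $\beta - 1/2$ also vanishes at $\mathfrak{p}_{-3/4}$. Here places of $\mathcal{K}$ are those trivial on $K$, $\mathfrak{p}_c$ is the place at $t=c$, and vanishing means positive valuation. The height $h$ of an element of $K(t)$ is its degree as a rational function in $t$. *)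

theory Defs
  imports "HOL-Computational_Algebra.Computational_Algebra"
          "HOL-Computational_Algebra.Normalized_Fraction"
begin

type_synonym 'a ratfun = "'a poly fract"

definition tvar :: "'a::field ratfun" where
  "tvar = to_fract [:0, 1:]"

definition const :: "'a::field \<Rightarrow> 'a ratfun" where
  "const c = to_fract [:c:]"

text \<open>Positive valuation at the finite place t = c (reduced numerator vanishes at c).\<close>
definition vanishes_at :: "'a::field_gcd \<Rightarrow> 'a ratfun \<Rightarrow> bool" where
  "vanishes_at c x = (poly (fst (quot_of_fract x)) c = 0)"

text \<open>Positive valuation at the infinite place.\<close>
definition vanishes_at_inf :: "'a::field_gcd ratfun \<Rightarrow> bool" where
  "vanishes_at_inf x = (x = 0 \<or> degree (fst (quot_of_fract x)) < degree (snd (quot_of_fract x)))"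

definition height :: "'a::field_gcd ratfun \<Rightarrow> nat" where
  "height x = max (degree (fst (quot_of_fract x))) (degree (snd (quot_of_fract x)))"

definition cond_star :: "'a::{field_char_0,field_gcd} ratfun \<Rightarrow> bool" where
  "cond_star \<beta> =
     (let \<gamma> = \<beta>^2 - \<beta> + tvar + 1 in
        vanishes_at (-1) \<beta>
      \<and> vanishes_at (-1) \<gamma>
      \<and> (\<forall>c. vanishes_at c \<gamma> \<longrightarrow> c = -1 \<or> c = -3/4)
      \<and> \<not> vanishes_at_inf \<gamma>
      \<and> (vanishes_at (-3/4) \<gamma> \<longrightarrow> vanishes_at (-3/4) (\<beta> - const (1/2))))"

definition phi2 :: "'a::field ratfun \<Rightarrow> 'a ratfun" where
  "phi2 z = (tvar + 1) * (z - 1) / (z + tvar)"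

end

theory Submission
  imports Defs
begin

text \<open>
  Write \<open>\<alpha> = p / q\<close> in lowest terms. Then \<open>phi2 \<alpha> = P / Q\<close> with \<open>P = (t + 1) (p - q)\<close> and
  \<open>Q = p + t q\<close>; as \<open>p\<close> vanishes at \<open>-1\<close> and \<open>q\<close> does not, \<open>P / Q\<close> is again in lowest terms.
  The numerator \<open>\<gamma>(p, q) = p\<^sup>2 - p q + (t + 1) q\<^sup>2\<close> of \<open>\<alpha>\<^sup>2 - \<alpha> + t + 1\<close> transforms as
  \<open>\<gamma>(P, Q) = (t + 1)\<^sup>2 \<gamma>(p, q)\<close>, so the zeros of the numerator only gain \<open>-1\<close>, and at \<open>t = -3/4\<close>
  the numerator of \<open>phi2 \<alpha> - 1/2\<close> is \<open>-1/4\<close> times that of \<open>\<alpha> - 1/2\<close>. Since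
  \<open>deg \<gamma>(p, q) > 2 deg q\<close>, the element \<open>\<alpha>\<^sup>2 - \<alpha> + t + 1\<close> never vanishes at infinity. The
  height grows by one because the leading term of whichever of \<open>p\<close>, \<open>t q\<close> has larger degree
  survives in \<open>P\<close> or \<open>Q\<close>.
\<close>

lemma coprime_add_mult_left_iff:
  fixes a b c :: "'a::{idom,algebraic_semidom}"
  shows "coprime (a + c * b) b \<longleftrightarrow> coprime a b"
proof -
  have "d dvd a + c * b \<longleftrightarrow> d dvd a" if "d dvd b" for d
    using that by (metis dvd_add_left_iff dvd_mult)
  then show ?thesis by (auto simp: coprime_def)
qed

lemma coprime_add_mult_right_iff:
  fixes a b c :: "'a::{idom,algebraic_semidom}"
  shows "coprime b (a + c * b) \<longleftrightarrow> coprime b a"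
  using coprime_add_mult_left_iff[of a c b] by (simp add: coprime_commute)

lemma coprime_linear_poly_left_iff:
  fixes p :: "'a::field_gcd poly"
  shows "coprime [:-c, 1:] p \<longleftrightarrow> poly p c \<noteq> 0"
proof
  assume "coprime [:-c, 1:] p"
  moreover have "\<not> is_unit [:-c, 1:]"
    by (simp add: is_unit_poly_iff)
  ultimately show "poly p c \<noteq> 0"
    using not_coprimeI[of "[:-c, 1:]"] by (auto simp: poly_eq_0_iff_dvd)
next
  assume "poly p c \<noteq> 0"
  then show "coprime [:-c, 1:] p"
    by (intro prime_elem_imp_coprime prime_elem_linear_field_poly)
      (simp_all add: poly_eq_0_iff_dvd)
qed

lemma quot_of_fract_to_fract_divide:
  fixes a b :: "'a::field_gcd poly"
  assumes "b \<noteq> 0" and "coprime a b"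
  defines "u \<equiv> inverse (unit_factor (lead_coeff b))"
  shows "quot_of_fract (to_fract a / to_fract b) = (smult u a, smult u b)"
proof -
  have "to_fract a / to_fract b = quot_to_fract (a, b)"
    by (simp add: quot_to_fract_def Fract_conv_to_fract)
  moreover have "p div [:unit_factor (lead_coeff b):] = smult u p" for p
    using div_smult_right[of p "unit_factor (lead_coeff b)" 1] by (simp add: u_def)
  ultimately show ?thesis
    using assms by (simp add: quot_of_fract_quot_to_fract normalize_quot_def unit_factor_poly_def)
qed

lemma vanishes_at_to_fract_divide:
  fixes a b :: "'a::field_gcd poly"
  assumes "b \<noteq> 0" and "coprime a b"
  shows "vanishes_at c (to_fract a / to_fract b) \<longleftrightarrow> poly a c = 0"
  using assms by (simp add: vanishes_at_def quot_of_fract_to_fract_divide)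

lemma vanishes_at_inf_to_fract_divide:
  fixes a b :: "'a::field_gcd poly"
  assumes "b \<noteq> 0" and "coprime a b"
  shows "vanishes_at_inf (to_fract a / to_fract b) \<longleftrightarrow> a = 0 \<or> degree a < degree b"
  using assms by (simp add: vanishes_at_inf_def quot_of_fract_to_fract_divide)

lemma height_to_fract_divide:
  fixes a b :: "'a::field_gcd poly"
  assumes "b \<noteq> 0" and "coprime a b"
  shows "height (to_fract a / to_fract b) = max (degree a) (degree b)"
  using assms by (simp add: height_def quot_of_fract_to_fract_divide)

lemma ratfun_coprime_fraction:
  fixes x :: "'a::field_gcd ratfun"
  obtains p q where "x = to_fract p / to_fract q" and "q \<noteq> 0" and "coprime p q"
proof
  show "x = to_fract (fst (quot_of_fract x)) / to_fract (snd (quot_of_fract x))"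
    by (metis Fract_conv_to_fract Fract_quot_of_fract snd_quot_of_fract_nonzero)
qed (simp_all add: coprime_quot_of_fract)

definition gamma_numerator :: "'a::comm_ring_1 poly \<Rightarrow> 'a poly \<Rightarrow> 'a poly" where
  "gamma_numerator a b = a\<^sup>2 - a * b + [:1, 1:] * b\<^sup>2"

lemma tvar_plus_one: "tvar + 1 = (to_fract [:1, 1:] :: 'a::field ratfun)"
proof -
  have "[:1, 1:] = [:0, 1:] + (1 :: 'a poly)"
    by (simp add: one_pCons)
  then show ?thesis
    by (simp add: tvar_def)
qed

lemma gamma_to_fract_divide:
  fixes a b :: "'a::field_gcd poly"
  assumes "b \<noteq> 0"
  defines "\<beta> \<equiv> to_fract a / to_fract b"
  shows "\<beta>\<^sup>2 - \<beta> + tvar + 1 = to_fract (gamma_numerator a b) / to_fract (b\<^sup>2)"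
proof -
  have "\<beta>\<^sup>2 - \<beta> + tvar + 1 = \<beta>\<^sup>2 - \<beta> + to_fract [:1, 1:]"
    by (simp add: tvar_plus_one flip: add.assoc)
  also have "\<dots> = to_fract (gamma_numerator a b) / to_fract (b\<^sup>2)"
    using assms
    by (simp add: gamma_numerator_def power2_eq_square field_simps
        del: mult_pCons_left mult_pCons_right)
  finally show ?thesis .
qed

lemma coprime_gamma_numerator:
  fixes a b :: "'a::field_gcd poly"
  assumes "coprime a b"
  shows "coprime (gamma_numerator a b) (b\<^sup>2)"
proof -
  have "gamma_numerator a b = a\<^sup>2 + ([:1, 1:] * b - a) * b"
    by (simp add: gamma_numerator_def algebra_simps power2_eq_square)
  with assms show ?thesis
    by (simp add: coprime_add_mult_left_iff)
qed

lemma degree_gamma_numerator_gt: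
  fixes a b :: "'a::field poly"
  assumes "b \<noteq> 0"
  shows "2 * degree b < degree (gamma_numerator a b)"
proof -
  have split: "gamma_numerator a b = a * (a - b) + [:1, 1:] * b\<^sup>2"
    by (simp add: gamma_numerator_def algebra_simps power2_eq_square)
  have odd_part: "degree ([:1, 1:] * b\<^sup>2) = 2 * degree b + 1"
    using assms by (simp add: degree_mult_eq degree_power_eq del: mult_pCons_left)
  show ?thesis
  proof (cases "degree a \<le> degree b")
    case True
    have "degree (a * (a - b)) \<le> degree a + degree (a - b)"
      by (rule degree_mult_le)
    also have "\<dots> \<le> 2 * degree b"
      using True degree_diff_le_max[of a b] by simp
    finally have "degree (gamma_numerator a b) = degree ([:1, 1:] * b\<^sup>2)"
      unfolding split using odd_part by (intro degree_add_eq_right) simp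
    then show ?thesis
      using odd_part by simp
  next
    case False
    then have "degree (a - b) = degree a" and "a \<noteq> 0" and "a - b \<noteq> 0"
      using degree_add_eq_left[of "-b" a] by auto
    then have even_part: "degree (a * (a - b)) = 2 * degree a"
      by (simp add: degree_mult_eq)
    then have "degree (gamma_numerator a b) = degree (a * (a - b))"
      unfolding split using odd_part False by (intro degree_add_eq_left) simp
    then show ?thesis
      using even_part False by simp
  qed
qed

definition cond_star_poly :: "'a::field_char_0 poly \<Rightarrow> 'a poly \<Rightarrow> bool" where
  "cond_star_poly p q \<longleftrightarrow>
     poly p (-1) = 0 \<and>
     poly (gamma_numerator p q) (-1) = 0 \<and>
     (\<forall>c. poly (gamma_numerator p q) c = 0 \<longrightarrow> c = -1 \<or> c = -3/4) \<and>
     (poly (gamma_numerator p q) (-3/4) = 0 \<longrightarrow> poly (p - smult (1/2) q) (-3/4) = 0)"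

lemma cond_star_to_fract_divide_iff:
  fixes p q :: "'a::{field_char_0,field_gcd} poly"
  assumes q: "q \<noteq> 0" and coprime: "coprime p q"
  shows "cond_star (to_fract p / to_fract q) \<longleftrightarrow> cond_star_poly p q"
proof -
  have q2: "q\<^sup>2 \<noteq> 0" and coprime_gamma: "coprime (gamma_numerator p q) (q\<^sup>2)"
    using assms coprime_gamma_numerator by auto
  have coprime_shift: "coprime (p - smult c q) q" for c
    using coprime coprime_add_mult_left_iff[of p "-[:c:]" q] by simp
  have shift: "to_fract p / to_fract q - const c = to_fract (p - smult c q) / to_fract q" for c
  proof -
    have "to_fract (p - smult c q) = to_fract p - const c * to_fract q"
      by (simp add: const_def flip: to_fract_mult)
    with q show ?thesis
      by (simp add: diff_divide_distrib)
  qed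
  have "\<not> vanishes_at_inf (to_fract (gamma_numerator p q) / to_fract (q\<^sup>2))"
    using q2 coprime_gamma degree_gamma_numerator_gt[OF q, of p]
    by (auto simp: vanishes_at_inf_to_fract_divide degree_power_eq)
  then show ?thesis
    unfolding cond_star_def cond_star_poly_def Let_def gamma_to_fract_divide[OF q] shift
      vanishes_at_to_fract_divide[OF q coprime] vanishes_at_to_fract_divide[OF q2 coprime_gamma]
      vanishes_at_to_fract_divide[OF q coprime_shift]
    by blast
qed

lemma phi2_to_fract_divide:
  fixes p q :: "'a::field poly"
  assumes "q \<noteq> 0"
  shows "phi2 (to_fract p / to_fract q) = to_fract ([:1, 1:] * (p - q)) / to_fract (p + [:0, 1:] * q)"
proof -
  define x y where "x = to_fract p" and "y = to_fract q"
  have "y \<noteq> 0"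
    using assms by (simp add: y_def)
  have "phi2 (x / y) = (tvar + 1) * ((x - y) / y) / ((x + tvar * y) / y)"
    using \<open>y \<noteq> 0\<close> by (simp add: phi2_def diff_divide_distrib add_divide_distrib)
  also have "\<dots> = (tvar + 1) * (x - y) / (x + tvar * y)"
    using \<open>y \<noteq> 0\<close> by simp
  also have "\<dots> = to_fract [:1, 1:] * (x - y) / (x + to_fract [:0, 1:] * y)"
    by (simp only: tvar_plus_one) (simp add: tvar_def)
  finally show ?thesis
    by (simp add: x_def y_def del: mult_pCons_left mult_pCons_right)
qed

lemma gamma_numerator_phi2:
  fixes p q :: "'a::comm_ring_1 poly"
  shows "gamma_numerator ([:1, 1:] * (p - q)) (p + [:0, 1:] * q) = [:1, 1:]\<^sup>2 * gamma_numerator p q"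
proof -
  define t :: "'a poly" where "t = [:0, 1:]"
  have "[:1, 1:] = t + 1"
    by (simp add: t_def one_pCons)
  then show ?thesis
    unfolding gamma_numerator_def t_def[symmetric]
    by (simp add: algebra_simps power2_eq_square)
qed

lemma coprime_phi2_fraction:
  fixes p q :: "'a::field_gcd poly"
  assumes coprime: "coprime p q" and root: "poly p (-1) = 0"
  shows "coprime ([:1, 1:] * (p - q)) (p + [:0, 1:] * q)" and "p + [:0, 1:] * q \<noteq> 0"
proof -
  define L Q :: "'a poly" where "L = [:1, 1:]" and "Q = p + [:0, 1:] * q"
  have L_coprime_iff: "coprime L r \<longleftrightarrow> poly r (-1) \<noteq> 0" for r
    using coprime_linear_poly_left_iff[of "-1" r] by (simp add: L_def)
  have "L dvd p"
    using root by (simp add: L_def poly_eq_0_iff_dvd)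
  with coprime have "coprime L q"
    using coprime_divisors dvd_refl by blast
  then have q_root: "poly q (-1) \<noteq> 0"
    by (simp add: L_coprime_iff)
  have Q_root: "poly Q (-1) = - poly q (-1)"
    by (simp add: Q_def root)
  then show "p + [:0, 1:] * q \<noteq> 0"
    using q_root by (metis Q_def neg_equal_0_iff_equal poly_0)
  have "coprime L Q"
    using Q_root q_root by (simp add: L_coprime_iff)
  moreover have "coprime (p - q) (L * q)"
  proof -
    have "coprime (p - q) q"
      using coprime coprime_add_mult_left_iff[of p "-1" q] by simp
    moreover have "coprime L (p - q)"
      using root q_root by (simp add: L_coprime_iff)
    ultimately show ?thesis
      by (simp add: coprime_commute)
  qed
  moreover have "Q = L * q + 1 * (p - q)"
    by (simp add: Q_def L_def)
  ultimately have "coprime (L * (p - q)) Q"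
    using coprime_add_mult_right_iff[of "p - q" "L * q" 1] by simp
  then show "coprime ([:1, 1:] * (p - q)) (p + [:0, 1:] * q)"
    by (simp add: L_def Q_def)
qed

lemma cond_star_poly_phi2:
  fixes p q :: "'a::field_char_0 poly"
  assumes "cond_star_poly p q"
  shows "cond_star_poly ([:1, 1:] * (p - q)) (p + [:0, 1:] * q)"
  unfolding cond_star_poly_def gamma_numerator_phi2
proof (intro conjI allI impI)
  show "poly ([:1, 1:] * (p - q)) (-1) = 0" and "poly ([:1, 1:]\<^sup>2 * gamma_numerator p q) (-1) = 0"
    by simp_all
  fix c :: 'a
  assume "poly ([:1, 1:]\<^sup>2 * gamma_numerator p q) c = 0"
  then have "c = -1 \<or> poly (gamma_numerator p q) c = 0"
    by (auto simp: add_eq_0_iff)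
  with assms show "c = -1 \<or> c = -3/4"
    by (auto simp: cond_star_poly_def)
next
  assume "poly ([:1, 1:]\<^sup>2 * gamma_numerator p q) (-3/4) = 0"
  then have "poly (gamma_numerator p q) (-3/4) = 0"
    by simp
  with assms have "poly (p - smult (1/2) q) (-3/4) = 0"
    by (simp add: cond_star_poly_def)
  moreover have "poly ([:1, 1:] * (p - q) - smult (1/2) (p + [:0, 1:] * q)) (-3/4)
                   = - (1/4) * poly (p - smult (1/2) q) (-3/4)"
    by (simp add: field_simps)
  ultimately show "poly ([:1, 1:] * (p - q) - smult (1/2) (p + [:0, 1:] * q)) (-3/4) = 0"
    by simp
qed

lemma degree_phi2_fraction:
  fixes p q :: "'a::field poly"
  assumes "q \<noteq> 0"
  shows "max (degree ([:1, 1:] * (p - q))) (degree (p + [:0, 1:] * q)) = max (degree p) (degree q) + 1"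
proof -
  have tq: "degree ([:0, 1:] * q) = degree q + 1"
    using assms by (simp add: degree_mult_eq del: mult_pCons_left)
  show ?thesis
  proof (cases "degree p \<le> degree q")
    case True
    then have "degree (p + [:0, 1:] * q) = degree q + 1"
      using tq by (simp add: degree_add_eq_right del: mult_pCons_left)
    moreover have "degree ([:1, 1:] * (p - q)) \<le> degree q + 1"
      using degree_mult_le[of "[:1, 1:]" "p - q"] degree_diff_le_max[of p q] True
      by (simp del: mult_pCons_left)
    ultimately show ?thesis
      using True by simp
  next
    case False
    then have "degree (p - q) = degree p" and "p - q \<noteq> 0"
      using degree_add_eq_left[of "-q" p] by auto
    then have "degree ([:1, 1:] * (p - q)) = degree p + 1"
      by (simp add: degree_mult_eq del: mult_pCons_left)
    moreover have "degree (p + [:0, 1:] * q) \<le> degree p"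
      using degree_add_le_max[of p "[:0, 1:] * q"] tq False by (simp del: mult_pCons_left)
    ultimately show ?thesis
      using False by simp
  qed
qed

theorem lemma5p14:
  fixes \<alpha> :: "'a::{alg_closed_field,field_char_0,field_gcd} ratfun"
  assumes "cond_star \<alpha>"
  shows "cond_star (phi2 \<alpha>) \<and> height (phi2 \<alpha>) = height \<alpha> + 1"
proof -
  obtain p q where \<alpha>: "\<alpha> = to_fract p / to_fract q" and q: "q \<noteq> 0" and coprime: "coprime p q"
    by (rule ratfun_coprime_fraction)
  define P Q where "P = [:1, 1:] * (p - q)" and "Q = p + [:0, 1:] * q"
  have star: "cond_star_poly p q"
    using assms by (simp add: \<alpha> cond_star_to_fract_divide_iff[OF q coprime])
  then have "poly p (-1) = 0"
    by (simp add: cond_star_poly_def)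
  then have Q: "Q \<noteq> 0" and coprime_PQ: "coprime P Q"
    using coprime_phi2_fraction[OF coprime] by (simp_all add: P_def Q_def)
  have phi2_\<alpha>: "phi2 \<alpha> = to_fract P / to_fract Q"
    unfolding \<alpha> P_def Q_def by (rule phi2_to_fract_divide[OF q])
  have "cond_star_poly P Q"
    unfolding P_def Q_def by (rule cond_star_poly_phi2[OF star])
  then have "cond_star (phi2 \<alpha>)"
    by (simp only: phi2_\<alpha> cond_star_to_fract_divide_iff[OF Q coprime_PQ])
  have "height (phi2 \<alpha>) = max (degree P) (degree Q)"
    by (simp only: phi2_\<alpha> height_to_fract_divide[OF Q coprime_PQ])
  also have "\<dots> = max (degree p) (degree q) + 1"
    unfolding P_def Q_def by (rule degree_phi2_fraction[OF q])
  also have "\<dots> = height \<alpha> + 1"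
    by (simp only: \<alpha> height_to_fract_divide[OF q coprime])
  finally have "height (phi2 \<alpha>) = height \<alpha> + 1" .
  with \<open>cond_star (phi2 \<alpha>)\<close> show ?thesis ..
qed

end
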